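(* Let $0=t_0<t_1<\dots<t_N=T$ be a temporal mesh with steps $\tau_k=t_k-t_{k-1}$, let $0<\alpha<1$, and let $\{B^{(n)}_k\}_{k=0}^n$, $0\le n\le N-1$, be real kernels satisfying: (A1) $B^{(n)}_0\ge B^{(n)}_1\ge\dots\ge B^{(n)}_n>0$ for $0\le n\le N-1$; (A2) there is $\pi_B>0$ with $B^{(n)}_{n-k}\ge\frac{1}{\pi_B\tau_{k+1}}\int_{t_k}^{t_{k+1}}\omega_{1-\alpha}(t_{n+1}-s)\,ds$ for $0\le k\le n$; (A3) there is $\rho>0$ with $\tau_k/\tau_{k+1}\le\rho$ for $1\le k\le N-1$. Let $\{g^n\}_{n=1}^N$ and $\{\lambda_l\}_{l=0}^{N-1}$ be nonnegative sequences with $\sum_{l=0}^{N-1}\lambda_l\le\Lambda$ for some $\Lambda>0$. Then for any nonnegative sequence $\{\psi^k\}_{k=0}^N$ satisfying $$\sum_{k=0}^nB^{(n)}_{n-k}(\psi^{k+1}-\psi^k)\le\sum_{k=0}^n\lambda_{n-k}\psi^k+g^{n+1},\qquad 0\le n\le N-1,$$ it holds, for $0\le n\le N-1$, $$\psi^{n+1}\le E_\alpha\big(\max(1,\rho)\pi_B\Lambda t_{n+1}^\alpha\big)\Big(\psi^0+\max_{0\le k\le n}\sum_{j=0}^k\tilde p^{(k)}_{k-j}g^{j+1}\Big).$$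
   Context: $\omega_{1-\alpha}(t)=t^{-\alpha}/\Gamma(1-\alpha)$. $E_\alpha(z)=\sum_{k=0}^\infty\frac{z^k}{\Gamma(1+k\alpha)}$ is the Mittag-Leffler function. The complementary kernels $\tilde p$ of $\{B^{(n)}_k\}$ are defined by $\tilde\theta^{(n)}_0=1/B^{(n)}_0$, $\tilde\theta^{(n)}_{n-k}=-\frac{1}{B^{(k)}_0}\sum_{j=k+1}^n\tilde\theta^{(n)}_{n-j}B^{(j)}_{j-k}$ for $0\le k\le n-1$, and $\tilde p^{(n)}_{n-k}=\sum_{j=k}^n\tilde\theta^{(j)}_{j-k}$ for $0\le k\le n$. *)

theory Defs
  imports "HOL-Analysis.Analysis"
begin

text \<open>Kernel omega_{1-alpha}(t) = t^(-alpha) / Gamma(1-alpha).\<close>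
definition omega :: "real \<Rightarrow> real \<Rightarrow> real" where
  "omega \<alpha> s = s powr (-\<alpha>) / Gamma (1 - \<alpha>)"

definition mittag_leffler :: "real \<Rightarrow> real \<Rightarrow> real" where
  "mittag_leffler \<alpha> z = (\<Sum>k. z ^ k / Gamma (1 + real k * \<alpha>))"

text \<open>theta B n m = theta^{(n)}_m, where B n k = B^{(n)}_k.
  For m = n - k with 0 <= k <= n-1:
  theta^{(n)}_{n-k} = -(1/B^{(k)}_0) * sum_{j=k+1}^n theta^{(n)}_{n-j} B^{(j)}_{j-k}.\<close>
function theta :: "(nat \<Rightarrow> nat \<Rightarrow> real) \<Rightarrow> nat \<Rightarrow> nat \<Rightarrow> real" where
  "theta B n m =
     (if m = 0 then 1 / B n 0
      else - (1 / B (n - m) 0) *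
        (\<Sum>j\<in>{n - m + 1..n}. theta B n (n - j) * B j (j - (n - m))))"
  by auto
termination by (relation "Wellfounded.measure (\<lambda>(B, n, m). m)") auto

definition ptilde :: "(nat \<Rightarrow> nat \<Rightarrow> real) \<Rightarrow> nat \<Rightarrow> nat \<Rightarrow> real" where
  "ptilde B n m = (\<Sum>j\<in>{n - m..n}. theta B j (j - (n - m)))"

end

theory Submission
  imports Defs
begin

text \<open>Write \<open>\<omega>_\<beta>(t) = t^(\<beta>-1)/\<Gamma>(\<beta>)\<close> and \<open>p\<close> for the complementary kernel. Under (A1)
  \<open>p\<close> is nonnegative, and it inverts the discrete Caputo operator on the left of the hypothesis,
  so \<open>\<psi>^(n+1)\<close> is at most \<open>\<psi>^0\<close>, plus the \<open>p\<close>-weighted sum of the \<open>g\<close>'s, plus \<open>\<Lambda>\<close> times a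
  \<open>p\<close>-weighted sum of bounds for the earlier \<open>\<psi>^i\<close>. The Mittag-Leffler bound then follows by
  induction on \<open>n\<close> from the estimate
  \<open>\<Sum>_i p^(n)_(n-i) \<omega>_(1+m\<alpha>)(t_i) \<le> max(1,\<rho>) \<pi>_B \<omega>_(1+(m+1)\<alpha>)(t_(n+1))\<close>,
  applied term by term to the series \<open>E_\<alpha>(c t^\<alpha>) = \<Sum>_m c^m \<omega>_(1+m\<alpha>)(t)\<close>.
  This comparison rests on the semigroup identity \<open>\<omega>_(1+m\<alpha>) = \<omega>_(1-\<alpha>) * \<omega>_((m+1)\<alpha>)\<close>: by (A2)
  the discrete Caputo operator applied to \<open>\<omega>_(1+(m+1)\<alpha>)\<close> dominates the L1 discretisation of
  this convolution, and that discretisation dominates \<open>\<omega>_(1+m\<alpha>)\<close> up to the factor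
  \<open>max(1,\<rho>)\<close>: by Chebyshev's inequality on each cell when \<open>\<omega>_((m+1)\<alpha>)\<close> decreases, and by
  Abel summation together with the step ratio bound (A3) when it increases.\<close>

section \<open>Complementary kernels\<close>

declare theta.simps [simp del]

lemma theta_0: "theta B n 0 = 1 / B n 0"
  by (subst theta.simps) simp

lemma theta_recurrence:
  assumes "k < n"
  shows "theta B n (n - k) = - (1 / B k 0) * (\<Sum>j\<in>{k+1..n}. theta B n (n - j) * B j (j - k))"
  using assms by (subst theta.simps) simp

lemma sum_theta_mult_kernel:
  assumes "B k 0 \<noteq> 0" and "k \<le> n"
  shows "(\<Sum>j\<in>{k..n}. theta B n (n - j) * B j (j - k)) = (if k = n then 1 else 0)"
proof (cases "k = n")
  case True
  then show ?thesis using assms by (simp add: theta_0)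
next
  case False
  with assms have "{k..n} = insert k {k+1..n}" "k < n" by auto
  then show ?thesis using assms False by (simp add: theta_recurrence)
qed

lemma sum_triangle_swap:
  fixes f :: "nat \<Rightarrow> nat \<Rightarrow> 'a::comm_monoid_add"
  shows "(\<Sum>i\<in>{m..n}. \<Sum>j\<in>{i..n}. f i j) = (\<Sum>j\<in>{m..n}. \<Sum>i\<in>{m..j}. f i j)"
proof -
  have "(\<Sum>i\<in>{m..n}. \<Sum>j\<in>{i..n}. f i j) = (\<Sum>i\<in>{m..n}. \<Sum>j\<in>{j\<in>{m..n}. i \<le> j}. f i j)"
    by (intro sum.cong) auto
  also have "\<dots> = (\<Sum>j\<in>{m..n}. \<Sum>i\<in>{i\<in>{m..n}. i \<le> j}. f i j)"
    by (rule sum.swap_restrict) auto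
  also have "\<dots> = (\<Sum>j\<in>{m..n}. \<Sum>i\<in>{m..j}. f i j)"
    by (intro sum.cong) auto
  finally show ?thesis .
qed

text \<open>\<open>ptilde\<close> sums \<open>theta\<close> along columns, and \<open>theta\<close> inverts the lower triangular
  matrix of the kernels.\<close>
lemma sum_ptilde_mult_kernel:
  assumes "\<And>i. i \<le> n \<Longrightarrow> B i 0 \<noteq> 0" and "k \<le> n"
  shows "(\<Sum>i\<in>{k..n}. ptilde B n (n - i) * B i (i - k)) = 1"
proof -
  have "(\<Sum>i\<in>{k..n}. ptilde B n (n - i) * B i (i - k))
      = (\<Sum>i\<in>{k..n}. \<Sum>j\<in>{i..n}. theta B j (j - i) * B i (i - k))"
    by (intro sum.cong) (auto simp: ptilde_def sum_distrib_right)
  also have "\<dots> = (\<Sum>j\<in>{k..n}. \<Sum>i\<in>{k..j}. theta B j (j - i) * B i (i - k))"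
    by (rule sum_triangle_swap)
  also have "\<dots> = (\<Sum>j\<in>{k..n}. if k = j then 1 else 0)"
    using assms by (intro sum.cong refl sum_theta_mult_kernel) auto
  also have "\<dots> = 1"
    using assms(2) by simp
  finally show ?thesis .
qed

definition discrete_caputo :: "(nat \<Rightarrow> nat \<Rightarrow> real) \<Rightarrow> (nat \<Rightarrow> real) \<Rightarrow> nat \<Rightarrow> real" where
  "discrete_caputo B x n = (\<Sum>k\<le>n. B n (n - k) * (x (Suc k) - x k))"

lemma sum_ptilde_discrete_caputo:
  assumes "\<And>i. i \<le> n \<Longrightarrow> B i 0 \<noteq> 0"
  shows "(\<Sum>i\<le>n. ptilde B n (n - i) * discrete_caputo B x i) = x (Suc n) - x 0"
proof -
  have "(\<Sum>i\<le>n. ptilde B n (n - i) * discrete_caputo B x i)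
      = (\<Sum>i\<in>{0..n}. \<Sum>k\<in>{0..i}. ptilde B n (n - i) * B i (i - k) * (x (Suc k) - x k))"
    by (simp add: discrete_caputo_def sum_distrib_left mult.assoc atLeast0AtMost)
  also have "\<dots> = (\<Sum>k\<in>{0..n}. (\<Sum>i\<in>{k..n}. ptilde B n (n - i) * B i (i - k)) * (x (Suc k) - x k))"
    by (simp add: sum_triangle_swap[symmetric] sum_distrib_right)
  also have "\<dots> = (\<Sum>k\<in>{0..n}. x (Suc k) - x k)"
    using assms by (simp add: sum_ptilde_mult_kernel)
  also have "\<dots> = x (Suc n) - x 0"
    by (simp add: sum_Suc_diff)
  finally show ?thesis .
qed

lemma kernel_ge_diag:
  fixes B :: "nat \<Rightarrow> nat \<Rightarrow> real"
  assumes "\<And>k. k < i \<Longrightarrow> B i (Suc k) \<le> B i k" and "l \<le> i"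
  shows "B i i \<le> B i l"
  by (rule lift_Suc_antimono_le_ivl[of "{..<i}"]) (use assms in auto)

text \<open>Subtracting the orthogonality relations at \<open>k\<close> and \<open>k + 1\<close> writes \<open>ptilde B n (n - k) * B k 0\<close>
  as a combination of the later values with the nonnegative coefficients
  \<open>B i (i - k - 1) - B i (i - k)\<close>; so induct downwards from \<open>k = n\<close>.\<close>
lemma ptilde_nonneg:
  fixes B :: "nat \<Rightarrow> nat \<Rightarrow> real"
  assumes mono: "\<And>i k. i \<le> n \<Longrightarrow> k < i \<Longrightarrow> B i (Suc k) \<le> B i k"
    and diag: "\<And>i. i \<le> n \<Longrightarrow> 0 < B i i"
    and "k \<le> n"
  shows "0 \<le> ptilde B n (n - k)"
  using \<open>k \<le> n\<close>
proof (induction "n - k" arbitrary: k rule: less_induct)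
  case less
  have B0_pos: "0 < B i 0" if "i \<le> n" for i
    using kernel_ge_diag[of i B 0] mono diag that by fastforce
  show ?case
  proof (cases "k = n")
    case True
    then show ?thesis using B0_pos[of n] by (simp add: ptilde_def theta_0)
  next
    case False
    with less.prems have "k < n" by simp
    then have "{k..n} = insert k {Suc k..n}" by auto
    then have "ptilde B n (n - k) * B k 0 + (\<Sum>i\<in>{Suc k..n}. ptilde B n (n - i) * B i (i - k))
        = (\<Sum>i\<in>{Suc k..n}. ptilde B n (n - i) * B i (i - Suc k))"
      using sum_ptilde_mult_kernel[of n B k] sum_ptilde_mult_kernel[of n B "Suc k"] B0_pos \<open>k < n\<close>
      by (simp add: less_imp_neq[symmetric])
    then have "ptilde B n (n - k) * B k 0
        = (\<Sum>i\<in>{Suc k..n}. ptilde B n (n - i) * (B i (i - Suc k) - B i (i - k)))"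
      by (simp add: sum_subtractf right_diff_distrib)
    also have "\<dots> \<ge> 0"
    proof (intro sum_nonneg mult_nonneg_nonneg)
      fix i assume i: "i \<in> {Suc k..n}"
      then show "0 \<le> ptilde B n (n - i)" using less by auto
      have "i - k = Suc (i - Suc k)" using i by auto
      then show "0 \<le> B i (i - Suc k) - B i (i - k)" using mono i by auto
    qed
    finally show ?thesis using B0_pos[of k] \<open>k < n\<close> by (simp add: zero_le_mult_iff)
  qed
qed

section \<open>The Mittag-Leffler series\<close>

text \<open>A geometric majorant \<open>A r^k\<close> with \<open>r^d = 1/2\<close>, where \<open>A\<close> covers the first \<open>K + d\<close> terms.\<close>
lemma summable_of_eventually_halving:
  fixes u :: "nat \<Rightarrow> real"
  assumes nonneg: "\<And>k. 0 \<le> u k" and "0 < d"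
    and halving: "\<And>k. K \<le> k \<Longrightarrow> u (k + d) \<le> u k / 2"
  shows "summable u"
proof -
  define r where "r = root d (1/2)"
  have r: "0 < r" "r < 1" "r ^ d = 1/2"
    using \<open>0 < d\<close> by (simp_all add: r_def real_root_gt_zero)
  define A where "A = Max ((\<lambda>k. u k / r ^ k) ` {..<K + d})"
  have majorant: "u k \<le> A * r ^ k" for k
  proof (induction k rule: less_induct)
    case (less k)
    show ?case
    proof (cases "k < K + d")
      case True
      then have "u k / r ^ k \<le> A" unfolding A_def by (intro Max_ge) auto
      then show ?thesis using r by (simp add: field_simps)
    next
      case False
      define j where "j = k - d"
      with False have j: "k = j + d" "K \<le> j" by auto
      then have "u k \<le> u j / 2" using halving by simp
      also have "\<dots> \<le> A * r ^ j / 2"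
        using less.IH[of j] j \<open>0 < d\<close> by simp
      also have "\<dots> = A * r ^ k"
        using r(3) j by (simp add: power_add)
      finally show ?thesis .
    qed
  qed
  have "summable (\<lambda>k. A * r ^ k)"
    using r by (intro summable_mult summable_geometric) simp
  then show ?thesis
    by (rule summable_comparison_test'[where N = 0]) (use majorant nonneg in simp)
qed

lemma Gamma_shift_ge:
  fixes \<alpha> :: real and k d :: nat
  assumes "0 < \<alpha>" and "1 \<le> real d * \<alpha>"
  shows "(1 + real k * \<alpha>) * Gamma (1 + real k * \<alpha>) \<le> Gamma (1 + real (k + d) * \<alpha>)"
proof -
  have "0 < 1 + real k * \<alpha>"
    using assms by (simp add: add_pos_nonneg)
  then have "1 + real k * \<alpha> \<notin> \<int>\<^sub>\<le>\<^sub>0"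
    by (auto dest: nonpos_Ints_nonpos)
  then have "(1 + real k * \<alpha>) * Gamma (1 + real k * \<alpha>) = Gamma (1 + real k * \<alpha> + 1)"
    by (rule Gamma_plus1[symmetric])
  also have "\<dots> \<le> Gamma (1 + real (k + d) * \<alpha>)"
    using assms Gamma_real_strict_mono[of "1 + real k * \<alpha> + 1" "1 + real (k + d) * \<alpha>"]
    by (cases "real d * \<alpha> = 1") (auto simp: algebra_simps)
  finally show ?thesis .
qed

text \<open>With \<open>d \<alpha> \<ge> 1\<close>, shifting the index by \<open>d\<close> gains a factor \<open>1 + k \<alpha>\<close> in the Gamma function,
  which eventually beats \<open>2 |z|^d\<close>.\<close>
lemma summable_mittag_leffler:
  fixes \<alpha> z :: real
  assumes "0 < \<alpha>"
  shows "summable (\<lambda>k. z ^ k / Gamma (1 + real k * \<alpha>))"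
proof (rule summable_norm_cancel)
  define u where "u k = \<bar>z\<bar> ^ k / Gamma (1 + real k * \<alpha>)" for k
  define d where "d = nat \<lceil>1 / \<alpha>\<rceil>"
  have "1 / \<alpha> \<le> real d"
    unfolding d_def by linarith
  then have d: "1 \<le> real d * \<alpha>" "0 < d"
    using assms by (auto simp: field_simps intro!: Nat.gr0I)
  have Gamma_pos: "0 < Gamma (1 + real k * \<alpha>)" for k
    using assms by (intro Gamma_real_pos) (simp add: add_pos_nonneg)
  have "u (k + d) \<le> u k / 2" if "2 * \<bar>z\<bar> ^ d / \<alpha> \<le> real k" for k
  proof -
    have z: "\<bar>z\<bar> ^ d / (1 + real k * \<alpha>) \<le> 1 / 2"
      using that assms by (simp add: field_simps add_pos_nonneg)
    have "u (k + d) = \<bar>z\<bar> ^ d * \<bar>z\<bar> ^ k / Gamma (1 + real (k + d) * \<alpha>)"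
      by (simp add: u_def power_add)
    also have "\<dots> \<le> \<bar>z\<bar> ^ d * \<bar>z\<bar> ^ k / ((1 + real k * \<alpha>) * Gamma (1 + real k * \<alpha>))"
      using Gamma_shift_ge[OF assms d(1), of k] Gamma_pos[of k] assms
      by (intro divide_left_mono) (auto intro!: mult_pos_pos add_pos_nonneg)
    also have "\<dots> = \<bar>z\<bar> ^ d / (1 + real k * \<alpha>) * u k"
      by (simp add: u_def)
    also have "\<dots> \<le> 1 / 2 * u k"
      using z Gamma_pos[of k] by (intro mult_right_mono) (simp_all add: u_def)
    finally show ?thesis by simp
  qed
  then have "summable u"
    by (intro summable_of_eventually_halving[OF _ \<open>0 < d\<close>, of _ "nat \<lceil>2 * \<bar>z\<bar> ^ d / \<alpha>\<rceil>"])
      (auto simp: u_def Gamma_pos less_imp_le)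
  then show "summable (\<lambda>k. norm (z ^ k / Gamma (1 + real k * \<alpha>)))"
    using Gamma_pos by (simp add: u_def[abs_def] power_abs abs_of_pos)
qed

lemma mittag_leffler_0: "mittag_leffler \<alpha> 0 = 1"
  unfolding mittag_leffler_def by (subst suminf_finite[of "{0}"]) auto

lemma mittag_leffler_mono:
  assumes "0 < \<alpha>" and "0 \<le> x" and "x \<le> y"
  shows "mittag_leffler \<alpha> x \<le> mittag_leffler \<alpha> y"
  unfolding mittag_leffler_def
  using assms by (intro suminf_le summable_mittag_leffler divide_right_mono power_mono)
    (auto intro!: add_pos_nonneg)

section \<open>Riemann--Liouville kernels\<close>

definition rl_kernel :: "real \<Rightarrow> real \<Rightarrow> real" where
  "rl_kernel \<beta> s = s powr (\<beta> - 1) / Gamma \<beta>"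

lemma omega_eq_rl_kernel: "omega \<alpha> = rl_kernel (1 - \<alpha>)"
  by (simp add: fun_eq_iff omega_def rl_kernel_def)

lemma rl_kernel_nonneg: "0 < \<beta> \<Longrightarrow> 0 \<le> rl_kernel \<beta> s"
  by (simp add: rl_kernel_def)

lemma rl_kernel_antimono:
  "0 < \<beta> \<Longrightarrow> \<beta> \<le> 1 \<Longrightarrow> 0 < s \<Longrightarrow> s \<le> s' \<Longrightarrow> rl_kernel \<beta> s' \<le> rl_kernel \<beta> s"
  unfolding rl_kernel_def by (intro divide_right_mono powr_mono2') auto

lemma rl_kernel_mono:
  "1 \<le> \<beta> \<Longrightarrow> 0 \<le> s \<Longrightarrow> s \<le> s' \<Longrightarrow> rl_kernel \<beta> s \<le> rl_kernel \<beta> s'"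
  unfolding rl_kernel_def by (intro divide_right_mono powr_mono2) auto

lemma has_real_derivative_rl_kernel:
  assumes "0 < \<beta>" and "0 < s"
  shows "(rl_kernel (1 + \<beta>) has_real_derivative rl_kernel \<beta> s) (at s)"
proof -
  have "\<beta> \<notin> \<int>\<^sub>\<le>\<^sub>0"
    using assms(1) nonpos_Ints_nonpos by force
  then have Gamma: "Gamma (1 + \<beta>) = \<beta> * Gamma \<beta>"
    using Gamma_plus1[of \<beta>] by (simp add: add.commute)
  have "((\<lambda>s. s powr \<beta>) has_real_derivative \<beta> * s powr (\<beta> - 1)) (at s)"
    using assms by (auto intro!: derivative_eq_intros)
  from DERIV_cdivide[OF this, of "Gamma (1 + \<beta>)"] show ?thesis
    unfolding rl_kernel_def using Gamma assms by simp
qed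

lemma continuous_on_rl_kernel:
  assumes "0 < \<beta>"
  shows "continuous_on {0..} (rl_kernel (1 + \<beta>))"
proof -
  have "Gamma (1 + \<beta>) \<noteq> 0"
    using Gamma_real_pos[of "1 + \<beta>"] assms by fastforce
  then show ?thesis
    unfolding rl_kernel_def using assms
    by (intro continuous_on_divide continuous_on_powr') (auto intro!: continuous_intros)
qed

lemma has_integral_rl_kernel:
  assumes "0 < \<beta>" and "0 \<le> a" and "a \<le> b"
  shows "(rl_kernel \<beta> has_integral rl_kernel (1 + \<beta>) b - rl_kernel (1 + \<beta>) a) {a..b}"
proof (rule fundamental_theorem_of_calculus_interior[OF \<open>a \<le> b\<close>])
  show "continuous_on {a..b} (rl_kernel (1 + \<beta>))"
    by (rule continuous_on_subset[OF continuous_on_rl_kernel[OF \<open>0 < \<beta>\<close>]])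
      (use \<open>0 \<le> a\<close> in auto)
  show "(rl_kernel (1 + \<beta>) has_vector_derivative rl_kernel \<beta> s) (at s)" if "s \<in> {a<..<b}" for s
    using has_real_derivative_rl_kernel[OF \<open>0 < \<beta>\<close>, of s] that assms
    by (simp add: has_real_derivative_iff_has_vector_derivative)
qed

lemma has_integral_rl_kernel_reflect:
  assumes "0 < \<beta>" and "a \<le> b" and "b \<le> x"
  shows "((\<lambda>s. rl_kernel \<beta> (x - s)) has_integral
           rl_kernel (1 + \<beta>) (x - a) - rl_kernel (1 + \<beta>) (x - b)) {a..b}"
proof -
  define F where "F s = - rl_kernel (1 + \<beta>) (x - s)" for s
  have "((\<lambda>s. rl_kernel \<beta> (x - s)) has_integral F b - F a) {a..b}"
  proof (rule fundamental_theorem_of_calculus_interior[OF \<open>a \<le> b\<close>])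
    have "continuous_on {a..b} (rl_kernel (1 + \<beta>) \<circ> (\<lambda>s. x - s))"
      using assms by (intro continuous_on_compose continuous_on_subset[OF continuous_on_rl_kernel])
        (auto intro!: continuous_intros)
    then show "continuous_on {a..b} F"
      unfolding F_def o_def by (intro continuous_intros)
    show "(F has_vector_derivative rl_kernel \<beta> (x - s)) (at s)" if "s \<in> {a<..<b}" for s
    proof -
      have "((\<lambda>s. x - s) has_real_derivative - 1) (at s)"
        by (auto intro!: derivative_eq_intros)
      then have "((\<lambda>s. rl_kernel (1 + \<beta>) (x - s)) has_real_derivative rl_kernel \<beta> (x - s) * - 1) (at s)"
        using that assms by (intro DERIV_chain2[where f = "rl_kernel (1 + \<beta>)"] has_real_derivative_rl_kernel) auto
      from DERIV_minus[OF this] show ?thesis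
        unfolding F_def has_real_derivative_iff_has_vector_derivative[symmetric] by simp
    qed
  qed
  then show ?thesis by (simp add: F_def)
qed

text \<open>The semigroup property \<open>\<omega>_\<gamma> * \<omega>_\<beta> = \<omega>_(\<beta>+\<gamma>)\<close>, obtained by rescaling the Beta integral
  to \<open>[0, x]\<close>.\<close>
lemma has_integral_rl_kernel_convolution:
  assumes \<beta>: "0 < \<beta>" and \<gamma>: "0 < \<gamma>" and x: "0 < x"
  shows "((\<lambda>s. rl_kernel \<gamma> (x - s) * rl_kernel \<beta> s) has_integral rl_kernel (\<beta> + \<gamma>) x) {0..x}"
proof -
  have "((\<lambda>u. u powr (\<beta> - 1) * (1 - u) powr (\<gamma> - 1)) has_integral Beta \<beta> \<gamma>) (cbox 0 1)"
    using has_integral_Beta_real[OF \<beta> \<gamma>] by simp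
  from has_integral_affinity[OF this, of "1 / x" 0] x
  have "((\<lambda>s. (s / x) powr (\<beta> - 1) * (1 - s / x) powr (\<gamma> - 1)) has_integral x * Beta \<beta> \<gamma>) {0..x}"
    by (simp add: image_mult_atLeastAtMost)
  then have "((\<lambda>s. x powr (\<beta> + \<gamma> - 2) / (Gamma \<beta> * Gamma \<gamma>) *
                 ((s / x) powr (\<beta> - 1) * (1 - s / x) powr (\<gamma> - 1)))
             has_integral x powr (\<beta> + \<gamma> - 2) / (Gamma \<beta> * Gamma \<gamma>) * (x * Beta \<beta> \<gamma>)) {0..x}"
    by (rule has_integral_mult_right)
  moreover have "x powr (\<beta> + \<gamma> - 2) / (Gamma \<beta> * Gamma \<gamma>) * ((s / x) powr (\<beta> - 1) * (1 - s / x) powr (\<gamma> - 1))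
      = rl_kernel \<gamma> (x - s) * rl_kernel \<beta> s" if "s \<in> {0..x}" for s
  proof -
    have "1 - s / x = (x - s) / x" using x by (simp add: field_simps)
    moreover have "x powr (\<beta> + \<gamma> - 2) = x powr (\<beta> - 1) * x powr (\<gamma> - 1)"
      by (simp add: powr_add[symmetric])
    ultimately show ?thesis
      using x that by (simp add: rl_kernel_def powr_divide field_simps)
  qed
  moreover have "Gamma \<beta> \<noteq> 0" "Gamma \<gamma> \<noteq> 0" "Gamma (\<beta> + \<gamma>) \<noteq> 0"
    using Gamma_real_pos[of \<beta>] Gamma_real_pos[of \<gamma>] Gamma_real_pos[of "\<beta> + \<gamma>"] \<beta> \<gamma>
    by fastforce+
  then have "x powr (\<beta> + \<gamma> - 2) / (Gamma \<beta> * Gamma \<gamma>) * (x * Beta \<beta> \<gamma>) = rl_kernel (\<beta> + \<gamma>) x"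
    using x
    by (simp add: rl_kernel_def Beta_def powr_diff powr_add field_simps power2_eq_square)
  ultimately show ?thesis
    by (metis (no_types, lifting) has_integral_cong)
qed

lemma rl_kernel_mean_value:
  assumes "0 < \<beta>" and "0 \<le> p" and "p < q"
  obtains \<xi> where "p < \<xi>" "\<xi> < q"
    and "rl_kernel (1 + \<beta>) q - rl_kernel (1 + \<beta>) p = (q - p) * rl_kernel \<beta> \<xi>"
proof -
  have cont: "continuous_on {p..q} (rl_kernel (1 + \<beta>))"
    by (rule continuous_on_subset[OF continuous_on_rl_kernel[OF \<open>0 < \<beta>\<close>]]) (use assms in auto)
  have diff: "rl_kernel (1 + \<beta>) differentiable (at x)" if "p < x" for x
    using has_real_derivative_rl_kernel[OF \<open>0 < \<beta>\<close>, of x] that assms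
    by (auto simp: real_differentiable_def)
  obtain l \<xi> where \<xi>: "p < \<xi>" "\<xi> < q"
    and D: "(rl_kernel (1 + \<beta>) has_real_derivative l) (at \<xi>)"
    and eq: "rl_kernel (1 + \<beta>) q - rl_kernel (1 + \<beta>) p = (q - p) * l"
    using MVT[OF \<open>p < q\<close> cont diff] by metis
  have "l = rl_kernel \<beta> \<xi>"
    by (rule DERIV_unique[OF D has_real_derivative_rl_kernel[OF \<open>0 < \<beta>\<close>]]) (use \<xi> assms in simp)
  with \<xi> eq show ?thesis
    using that by blast
qed

lemma rl_kernel_le_scaled:
  assumes "0 < \<gamma>" and "\<gamma> \<le> 1" and "0 < \<rho>" and "0 \<le> x" and "x \<le> \<rho> * y"
  shows "rl_kernel (1 + \<gamma>) x \<le> max 1 \<rho> * rl_kernel (1 + \<gamma>) y"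
proof -
  have "0 \<le> \<rho> * y"
    using assms by linarith
  then have "0 \<le> y"
    using \<open>0 < \<rho>\<close> by (simp add: zero_le_mult_iff)
  have "rl_kernel (1 + \<gamma>) x \<le> rl_kernel (1 + \<gamma>) (\<rho> * y)"
    using assms by (intro rl_kernel_mono) auto
  also have "\<dots> = \<rho> powr \<gamma> * rl_kernel (1 + \<gamma>) y"
    using assms \<open>0 \<le> y\<close> by (simp add: rl_kernel_def powr_mult)
  also have "\<dots> \<le> max 1 \<rho> * rl_kernel (1 + \<gamma>) y"
  proof (rule mult_right_mono)
    show "\<rho> powr \<gamma> \<le> max 1 \<rho>"
    proof (cases "\<rho> \<le> 1")
      case True
      then show ?thesis using assms powr_mono2[of \<gamma> \<rho> 1] by simp
    next
      case False
      then show ?thesis using assms powr_mono[of \<gamma> 1 \<rho>] by simp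
    qed
  qed (use assms in \<open>simp add: rl_kernel_nonneg\<close>)
  finally show ?thesis .
qed

lemma rl_kernel_opposite_order:
  assumes "0 < \<beta>" "\<beta> \<le> 1" "0 < \<gamma>" "\<gamma> \<le> 1" and "0 < s" "0 < \<xi>" "s < x" "\<xi> < x"
  shows "(rl_kernel \<beta> s - rl_kernel \<beta> \<xi>) * (rl_kernel \<gamma> (x - s) - rl_kernel \<gamma> (x - \<xi>)) \<le> 0"
proof (cases "s \<le> \<xi>")
  case True
  then have "rl_kernel \<beta> \<xi> \<le> rl_kernel \<beta> s" "rl_kernel \<gamma> (x - s) \<le> rl_kernel \<gamma> (x - \<xi>)"
    using assms by (auto intro!: rl_kernel_antimono)
  then show ?thesis by (simp add: mult_nonneg_nonpos)
next
  case False
  then have "rl_kernel \<beta> s \<le> rl_kernel \<beta> \<xi>" "rl_kernel \<gamma> (x - \<xi>) \<le> rl_kernel \<gamma> (x - s)"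
    using assms by (auto intro!: rl_kernel_antimono)
  then show ?thesis by (simp add: mult_nonpos_nonneg)
qed

text \<open>It is written with
  \<open>(x powr \<alpha>) ^ m\<close> so that it equals \<open>1\<close> for \<open>m = 0\<close> also at \<open>x = 0\<close>, where \<open>0 powr 0 = 0\<close>.\<close>
definition ml_term :: "real \<Rightarrow> nat \<Rightarrow> real \<Rightarrow> real" where
  "ml_term \<alpha> m x = (x powr \<alpha>) ^ m / Gamma (1 + real m * \<alpha>)"

lemma ml_term_eq_rl_kernel: "0 < x \<Longrightarrow> ml_term \<alpha> m x = rl_kernel (1 + real m * \<alpha>) x"
  by (simp add: ml_term_def rl_kernel_def powr_power)

lemma ml_term_eq_rl_kernel_nonneg:
  "0 < m \<Longrightarrow> 0 \<le> x \<Longrightarrow> ml_term \<alpha> m x = rl_kernel (1 + real m * \<alpha>) x"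
  by (cases "x = 0") (simp_all add: ml_term_eq_rl_kernel, simp add: ml_term_def rl_kernel_def)

lemma ml_term_mono: "0 \<le> \<alpha> \<Longrightarrow> 0 \<le> x \<Longrightarrow> x \<le> y \<Longrightarrow> ml_term \<alpha> m x \<le> ml_term \<alpha> m y"
  unfolding ml_term_def
  by (intro divide_right_mono power_mono powr_mono2) (auto intro!: Gamma_real_nonneg add_pos_nonneg)

lemma sums_ml_term:
  "0 < \<alpha> \<Longrightarrow> (\<lambda>m. c ^ m * ml_term \<alpha> m x) sums mittag_leffler \<alpha> (c * x powr \<alpha>)"
  using summable_mittag_leffler[of \<alpha> "c * x powr \<alpha>"]
  by (simp add: mittag_leffler_def ml_term_def power_mult_distrib summable_sums)

text \<open>Expanding both Mittag-Leffler functions into their series, the hypothesis bounds the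
  \<open>m\<close>-th term on the left by the \<open>(m+1)\<close>-st term on the right.\<close>
lemma mittag_leffler_sum_le:
  fixes P x :: "'a \<Rightarrow> real"
  assumes "0 < \<alpha>" and "0 \<le> K" and "0 \<le> \<Lambda>"
    and shift: "\<And>m. (\<Sum>i\<in>I. P i * ml_term \<alpha> m (x i)) \<le> K * ml_term \<alpha> (Suc m) y"
  shows "1 + \<Lambda> * (\<Sum>i\<in>I. P i * mittag_leffler \<alpha> (K * \<Lambda> * x i powr \<alpha>))
           \<le> mittag_leffler \<alpha> (K * \<Lambda> * y powr \<alpha>)"
proof -
  define c where "c = K * \<Lambda>"
  have lhs: "(\<lambda>m. \<Lambda> * (\<Sum>i\<in>I. P i * (c ^ m * ml_term \<alpha> m (x i))))
          sums (\<Lambda> * (\<Sum>i\<in>I. P i * mittag_leffler \<alpha> (c * x i powr \<alpha>)))"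
    using sums_ml_term[OF \<open>0 < \<alpha>\<close>] by (intro sums_mult sums_sum) blast
  have rhs: "(\<lambda>m. c ^ Suc m * ml_term \<alpha> (Suc m) y) sums (mittag_leffler \<alpha> (c * y powr \<alpha>) - 1)"
    using sums_ml_term[OF \<open>0 < \<alpha>\<close>, of c y] by (subst sums_Suc_iff) (simp add: ml_term_def)
  have "\<Lambda> * (\<Sum>i\<in>I. P i * (c ^ m * ml_term \<alpha> m (x i))) \<le> c ^ Suc m * ml_term \<alpha> (Suc m) y" for m
  proof -
    have "\<Lambda> * (\<Sum>i\<in>I. P i * (c ^ m * ml_term \<alpha> m (x i))) = \<Lambda> * c ^ m * (\<Sum>i\<in>I. P i * ml_term \<alpha> m (x i))"
      by (simp add: sum_distrib_left mult_ac)
    also have "\<dots> \<le> \<Lambda> * c ^ m * (K * ml_term \<alpha> (Suc m) y)"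
      using shift[of m] assms by (intro mult_left_mono) (simp_all add: c_def)
    finally show ?thesis by (simp add: c_def mult_ac)
  qed
  then have "\<Lambda> * (\<Sum>i\<in>I. P i * mittag_leffler \<alpha> (c * x i powr \<alpha>))
      \<le> mittag_leffler \<alpha> (c * y powr \<alpha>) - 1"
    by (rule sums_le[OF _ lhs rhs])
  then show ?thesis
    unfolding c_def by simp
qed

section \<open>L1 estimates on a mesh\<close>

text \<open>One cell of Chebyshev's integral inequality.\<close>
lemma has_integral_mult_le_mean:
  fixes f w :: "real \<Rightarrow> real"
  assumes "p < q"
    and f: "(f has_integral I) {p..q}" and w: "(w has_integral W) {p..q}"
    and wf: "((\<lambda>s. w s * f s) has_integral J) {p..q}"
    and mean: "I = (q - p) * f \<xi>"
    and opposite: "\<And>s. s \<in> {p<..<q} \<Longrightarrow> (f s - f \<xi>) * (w s - w \<xi>) \<le> 0"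
  shows "J \<le> I / (q - p) * W"
proof -
  define c where "c = f \<xi> * w \<xi>"
  have bound: "((\<lambda>s. f \<xi> * w s + w \<xi> * f s - c) has_integral f \<xi> * W + w \<xi> * I - (q - p) * c) {p..q}"
    using has_integral_diff[OF has_integral_add[OF has_integral_mult_right[OF w]
          has_integral_mult_right[OF f]] has_integral_const_real[of c p q]] \<open>p < q\<close>
    by simp
  have "J \<le> f \<xi> * W + w \<xi> * I - (q - p) * c"
  proof (rule has_integral_le)
    show "((\<lambda>s. w s * f s) has_integral J) {p<..<q}"
      using wf by (simp only: has_integral_Icc_iff_Ioo)
    show "((\<lambda>s. f \<xi> * w s + w \<xi> * f s - c) has_integral f \<xi> * W + w \<xi> * I - (q - p) * c) {p<..<q}"
      using bound by (simp only: has_integral_Icc_iff_Ioo)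
    show "w s * f s \<le> f \<xi> * w s + w \<xi> * f s - c" if "s \<in> {p<..<q}" for s
      using opposite[OF that] by (simp add: c_def algebra_simps)
  qed
  also have "\<dots> = I / (q - p) * W"
    using \<open>p < q\<close> by (simp add: mean c_def)
  finally show ?thesis .
qed

text \<open>Abel summation by parts.\<close>
lemma sum_mult_le_of_tail_sums_le:
  fixes a x y :: "nat \<Rightarrow> real"
  assumes mono: "\<And>l. Suc l < n \<Longrightarrow> a l \<le> a (Suc l)" and "0 \<le> a 0"
    and tails: "\<And>r. r < n \<Longrightarrow> (\<Sum>l\<in>{r..<n}. x l) \<le> (\<Sum>l\<in>{r..<n}. y l)"
  shows "(\<Sum>l<n. a l * x l) \<le> (\<Sum>l<n. a l * y l)"
proof -
  define D where "D r = (\<Sum>l\<in>{r..<n}. y l - x l)" for r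
  have D_nonneg: "0 \<le> D r" for r
    using tails[of r] by (cases "r < n") (simp_all add: D_def sum_subtractf)
  have "a r * D r \<le> (\<Sum>l\<in>{r..<n}. a l * (y l - x l))" if "r \<le> n" for r
    using that
  proof (induction r rule: inc_induct)
    case (step r)
    then have split: "{r..<n} = insert r {Suc r..<n}" by auto
    have "a r * D (Suc r) \<le> a (Suc r) * D (Suc r)"
      using mono[of r] D_nonneg[of "Suc r"]
      by (cases "Suc r < n") (auto intro: mult_right_mono simp: D_def)
    then show ?case
      using step.IH by (simp add: split D_def distrib_left)
  qed (simp add: D_def)
  from this[of 0] have "a 0 * D 0 \<le> (\<Sum>l<n. a l * (y l - x l))"
    by (simp add: atLeast0LessThan)
  moreover have "0 \<le> a 0 * D 0"
    using \<open>0 \<le> a 0\<close> D_nonneg by simp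
  ultimately show ?thesis
    by (simp add: right_diff_distrib sum_subtractf)
qed

locale mesh =
  fixes t :: "nat \<Rightarrow> real" and N :: nat
  assumes t_0: "t 0 = 0" and t_less_Suc: "\<And>k. k < N \<Longrightarrow> t k < t (Suc k)"
begin

lemma t_mono: "k \<le> l \<Longrightarrow> l \<le> N \<Longrightarrow> t k \<le> t l"
  by (rule lift_Suc_mono_le_ivl[of "{..<N}"]) (auto intro: less_imp_le t_less_Suc)

lemma t_less: "k < l \<Longrightarrow> l \<le> N \<Longrightarrow> t k < t l"
  by (rule lift_Suc_mono_less_ivl[of "{..<N}"]) (auto intro: t_less_Suc)

lemma t_nonneg: "k \<le> N \<Longrightarrow> 0 \<le> t k"
  using t_mono[of 0 k] t_0 by simp

lemma integral_eq_sum_cells: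
  fixes f :: "real \<Rightarrow> 'a::banach"
  assumes "r \<le> n" and "n \<le> N" and "f integrable_on {t r..t n}"
  shows "integral {t r..t n} f = (\<Sum>k\<in>{r..<n}. integral {t k..t (Suc k)} f)"
  using assms
proof (induction n)
  case (Suc n)
  show ?case
  proof (cases "r = Suc n")
    case False
    with Suc.prems have "r \<le> n" by simp
    have le: "t r \<le> t n" "t n \<le> t (Suc n)"
      using \<open>r \<le> n\<close> Suc.prems by (auto intro: t_mono)
    have "integral {t r..t (Suc n)} f = integral {t r..t n} f + integral {t n..t (Suc n)} f"
      using Henstock_Kurzweil_Integration.integral_combine[OF le Suc.prems(3)] by simp
    moreover have "f integrable_on {t r..t n}"
      using integrable_on_subinterval[OF Suc.prems(3)] le(2) by simp
    ultimately show ?thesis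
      using Suc.IH \<open>r \<le> n\<close> Suc.prems by simp
  qed simp
qed simp

definition slope :: "(real \<Rightarrow> real) \<Rightarrow> nat \<Rightarrow> real" where
  "slope F k = (F (t (Suc k)) - F (t k)) / (t (Suc k) - t k)"

definition cell_weight :: "(real \<Rightarrow> real) \<Rightarrow> real \<Rightarrow> nat \<Rightarrow> real" where
  "cell_weight w x k = integral {t k..t (Suc k)} (\<lambda>s. w (x - s))"

text \<open>The L1 discretisation of \<open>\<integral>_0^t_(n+1) w(t_(n+1) - s) F'(s) ds\<close>: on each cell, \<open>F'\<close> is
  replaced by its mean value.\<close>
definition l1_sum :: "(real \<Rightarrow> real) \<Rightarrow> (real \<Rightarrow> real) \<Rightarrow> nat \<Rightarrow> real" where
  "l1_sum w F n = (\<Sum>k\<le>n. slope F k * cell_weight w (t (Suc n)) k)"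

lemma slope_rl_kernel:
  assumes "0 < \<beta>" and "k < N"
  obtains \<xi> where "t k < \<xi>" "\<xi> < t (Suc k)" "slope (rl_kernel (1 + \<beta>)) k = rl_kernel \<beta> \<xi>"
proof -
  obtain \<xi> where "t k < \<xi>" "\<xi> < t (Suc k)"
    and "rl_kernel (1 + \<beta>) (t (Suc k)) - rl_kernel (1 + \<beta>) (t k) = (t (Suc k) - t k) * rl_kernel \<beta> \<xi>"
    using rl_kernel_mean_value[OF \<open>0 < \<beta>\<close> t_nonneg t_less_Suc] assms by (metis less_imp_le)
  then show ?thesis
    using that t_less_Suc[OF \<open>k < N\<close>] by (simp add: slope_def)
qed

lemma slope_rl_kernel_nonneg: "0 < \<beta> \<Longrightarrow> k < N \<Longrightarrow> 0 \<le> slope (rl_kernel (1 + \<beta>)) k"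
  by (metis slope_rl_kernel rl_kernel_nonneg)

lemma has_integral_cell_weight:
  assumes "0 < \<gamma>" and "k < N" and "t (Suc k) \<le> x"
  shows "((\<lambda>s. rl_kernel \<gamma> (x - s)) has_integral cell_weight (rl_kernel \<gamma>) x k) {t k..t (Suc k)}"
    and "cell_weight (rl_kernel \<gamma>) x k = rl_kernel (1 + \<gamma>) (x - t k) - rl_kernel (1 + \<gamma>) (x - t (Suc k))"
proof -
  have "((\<lambda>s. rl_kernel \<gamma> (x - s)) has_integral
      rl_kernel (1 + \<gamma>) (x - t k) - rl_kernel (1 + \<gamma>) (x - t (Suc k))) {t k..t (Suc k)}"
    using assms t_less_Suc[of k] by (intro has_integral_rl_kernel_reflect) auto
  then show "((\<lambda>s. rl_kernel \<gamma> (x - s)) has_integral cell_weight (rl_kernel \<gamma>) x k) {t k..t (Suc k)}"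
    and "cell_weight (rl_kernel \<gamma>) x k = rl_kernel (1 + \<gamma>) (x - t k) - rl_kernel (1 + \<gamma>) (x - t (Suc k))"
    by (auto simp: cell_weight_def integral_unique)
qed

lemma cell_weight_nonneg:
  "0 < \<gamma> \<Longrightarrow> k < N \<Longrightarrow> t (Suc k) \<le> x \<Longrightarrow> 0 \<le> cell_weight (rl_kernel \<gamma>) x k"
  by (rule has_integral_nonneg[OF has_integral_cell_weight(1)]) (auto simp: rl_kernel_nonneg)

lemma sum_cell_weights:
  assumes "0 < \<gamma>" and "r \<le> m" and "m \<le> N" and "t m \<le> x"
  shows "(\<Sum>k\<in>{r..<m}. cell_weight (rl_kernel \<gamma>) x k) = rl_kernel (1 + \<gamma>) (x - t r) - rl_kernel (1 + \<gamma>) (x - t m)"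
proof -
  have "cell_weight (rl_kernel \<gamma>) x k = (- rl_kernel (1 + \<gamma>) (x - t (Suc k))) - (- rl_kernel (1 + \<gamma>) (x - t k))"
    if "k \<in> {r..<m}" for k
    using assms that t_mono[of "Suc k" m] by (simp add: has_integral_cell_weight(2))
  then have "(\<Sum>k\<in>{r..<m}. cell_weight (rl_kernel \<gamma>) x k)
      = (\<Sum>k\<in>{r..<m}. (- rl_kernel (1 + \<gamma>) (x - t (Suc k))) - (- rl_kernel (1 + \<gamma>) (x - t k)))"
    by (rule sum.cong[OF refl])
  also have "\<dots> = rl_kernel (1 + \<gamma>) (x - t r) - rl_kernel (1 + \<gamma>) (x - t m)"
    using sum_Suc_diff'[OF \<open>r \<le> m\<close>, of "\<lambda>k. - rl_kernel (1 + \<gamma>) (x - t k)"] by simp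
  finally show ?thesis .
qed

lemma l1_sum_rl_kernel_nonneg:
  "0 < \<beta> \<Longrightarrow> 0 < \<gamma> \<Longrightarrow> n < N \<Longrightarrow> 0 \<le> l1_sum (rl_kernel \<gamma>) (rl_kernel (1 + \<beta>)) n"
  unfolding l1_sum_def
  by (intro sum_nonneg mult_nonneg_nonneg slope_rl_kernel_nonneg cell_weight_nonneg) (auto intro: t_mono)

lemma rl_kernel_convolution_cells:
  assumes "0 < \<beta>" and "0 < \<gamma>" and "0 < n" and "n \<le> N"
  shows "\<And>k. k < n \<Longrightarrow> (\<lambda>s. rl_kernel \<gamma> (t n - s) * rl_kernel \<beta> s) integrable_on {t k..t (Suc k)}"
    and "rl_kernel (\<beta> + \<gamma>) (t n)
           = (\<Sum>k<n. integral {t k..t (Suc k)} (\<lambda>s. rl_kernel \<gamma> (t n - s) * rl_kernel \<beta> s))"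
proof -
  have conv: "((\<lambda>s. rl_kernel \<gamma> (t n - s) * rl_kernel \<beta> s) has_integral rl_kernel (\<beta> + \<gamma>) (t n)) {t 0..t n}"
    using has_integral_rl_kernel_convolution assms t_less[of 0 n] t_0 by simp
  show "(\<lambda>s. rl_kernel \<gamma> (t n - s) * rl_kernel \<beta> s) integrable_on {t k..t (Suc k)}" if "k < n" for k
    using that assms t_mono[of 0 k] t_mono[of "Suc k" n]
    by (intro integrable_on_subinterval[OF has_integral_integrable[OF conv]]) auto
  show "rl_kernel (\<beta> + \<gamma>) (t n)
      = (\<Sum>k<n. integral {t k..t (Suc k)} (\<lambda>s. rl_kernel \<gamma> (t n - s) * rl_kernel \<beta> s))"
    using integral_eq_sum_cells[OF _ \<open>n \<le> N\<close> has_integral_integrable[OF conv]] conv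
    by (simp add: integral_unique atLeast0LessThan)
qed

lemma cell_integral_le_slope_concave:
  assumes \<beta>: "0 < \<beta>" "\<beta> \<le> 1" and \<gamma>: "0 < \<gamma>" "\<gamma> \<le> 1" and k: "k < N" "t (Suc k) \<le> x"
    and int: "(\<lambda>s. rl_kernel \<gamma> (x - s) * rl_kernel \<beta> s) integrable_on {t k..t (Suc k)}"
  shows "integral {t k..t (Suc k)} (\<lambda>s. rl_kernel \<gamma> (x - s) * rl_kernel \<beta> s)
           \<le> slope (rl_kernel (1 + \<beta>)) k * cell_weight (rl_kernel \<gamma>) x k"
proof -
  obtain \<xi> where \<xi>: "t k < \<xi>" "\<xi> < t (Suc k)" and mean: "slope (rl_kernel (1 + \<beta>)) k = rl_kernel \<beta> \<xi>"
    using slope_rl_kernel[OF \<beta>(1) k(1)] .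
  have "integral {t k..t (Suc k)} (\<lambda>s. rl_kernel \<gamma> (x - s) * rl_kernel \<beta> s)
      \<le> (rl_kernel (1 + \<beta>) (t (Suc k)) - rl_kernel (1 + \<beta>) (t k)) / (t (Suc k) - t k)
         * cell_weight (rl_kernel \<gamma>) x k"
  proof (rule has_integral_mult_le_mean)
    show "(rl_kernel \<beta> has_integral rl_kernel (1 + \<beta>) (t (Suc k)) - rl_kernel (1 + \<beta>) (t k)) {t k..t (Suc k)}"
      using k t_nonneg[of k] t_less_Suc[of k] by (intro has_integral_rl_kernel \<beta>) auto
    show "((\<lambda>s. rl_kernel \<gamma> (x - s)) has_integral cell_weight (rl_kernel \<gamma>) x k) {t k..t (Suc k)}"
      using has_integral_cell_weight(1)[OF \<gamma>(1) k] .
    show "((\<lambda>s. rl_kernel \<gamma> (x - s) * rl_kernel \<beta> s) has_integral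
        integral {t k..t (Suc k)} (\<lambda>s. rl_kernel \<gamma> (x - s) * rl_kernel \<beta> s)) {t k..t (Suc k)}"
      using int by (rule integrable_integral)
    show "rl_kernel (1 + \<beta>) (t (Suc k)) - rl_kernel (1 + \<beta>) (t k) = (t (Suc k) - t k) * rl_kernel \<beta> \<xi>"
      using mean t_less_Suc[OF k(1)] by (simp add: slope_def field_simps)
    show "(rl_kernel \<beta> s - rl_kernel \<beta> \<xi>) * (rl_kernel \<gamma> (x - s) - rl_kernel \<gamma> (x - \<xi>)) \<le> 0"
      if "s \<in> {t k<..<t (Suc k)}" for s
      using that \<xi> k t_nonneg[of k] by (intro rl_kernel_opposite_order \<beta> \<gamma>) auto
  qed (use t_less_Suc[OF k(1)] in simp)
  then show ?thesis
    by (simp add: slope_def)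
qed

lemma rl_kernel_le_l1_sum_concave:
  assumes \<beta>: "0 < \<beta>" "\<beta> \<le> 1" and \<gamma>: "0 < \<gamma>" "\<gamma> \<le> 1" and "n < N"
  shows "rl_kernel (\<beta> + \<gamma>) (t (Suc n)) \<le> l1_sum (rl_kernel \<gamma>) (rl_kernel (1 + \<beta>)) n"
proof -
  have "rl_kernel (\<beta> + \<gamma>) (t (Suc n))
      = (\<Sum>k<Suc n. integral {t k..t (Suc k)} (\<lambda>s. rl_kernel \<gamma> (t (Suc n) - s) * rl_kernel \<beta> s))"
    using rl_kernel_convolution_cells(2)[OF \<beta>(1) \<gamma>(1), of "Suc n"] assms by simp
  also have "\<dots> \<le> (\<Sum>k<Suc n. slope (rl_kernel (1 + \<beta>)) k * cell_weight (rl_kernel \<gamma>) (t (Suc n)) k)"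
    using assms rl_kernel_convolution_cells(1)[OF \<beta>(1) \<gamma>(1), of "Suc n"]
    by (intro sum_mono cell_integral_le_slope_concave) (auto intro: t_mono)
  also have "\<dots> = l1_sum (rl_kernel \<gamma>) (rl_kernel (1 + \<beta>)) n"
    by (simp add: l1_sum_def lessThan_Suc_atMost)
  finally show ?thesis .
qed

lemma slope_rl_kernel_bounds:
  assumes "1 \<le> \<beta>" and "k < N"
  shows "rl_kernel \<beta> (t k) \<le> slope (rl_kernel (1 + \<beta>)) k"
    and "slope (rl_kernel (1 + \<beta>)) k \<le> rl_kernel \<beta> (t (Suc k))"
proof -
  obtain \<xi> where "t k < \<xi>" "\<xi> < t (Suc k)" "slope (rl_kernel (1 + \<beta>)) k = rl_kernel \<beta> \<xi>"
    using slope_rl_kernel[of \<beta> k] assms by auto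
  then show "rl_kernel \<beta> (t k) \<le> slope (rl_kernel (1 + \<beta>)) k"
    and "slope (rl_kernel (1 + \<beta>)) k \<le> rl_kernel \<beta> (t (Suc k))"
    using assms t_nonneg[of k] by (auto intro!: rl_kernel_mono)
qed

text \<open>\<open>\<omega>_\<beta>\<close> increases, so on a cell it is dominated by its value at the right end point, and
  hence by the slope on the next cell.\<close>
lemma cell_integral_le_slope_convex:
  assumes \<beta>: "1 \<le> \<beta>" and \<gamma>: "0 < \<gamma>" and k: "Suc k < N" "t (Suc k) \<le> x"
    and int: "(\<lambda>s. rl_kernel \<gamma> (x - s) * rl_kernel \<beta> s) integrable_on {t k..t (Suc k)}"
  shows "integral {t k..t (Suc k)} (\<lambda>s. rl_kernel \<gamma> (x - s) * rl_kernel \<beta> s)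
           \<le> slope (rl_kernel (1 + \<beta>)) (Suc k) * cell_weight (rl_kernel \<gamma>) x k"
proof -
  have "integral {t k..t (Suc k)} (\<lambda>s. rl_kernel \<gamma> (x - s) * rl_kernel \<beta> s)
      \<le> rl_kernel \<beta> (t (Suc k)) * cell_weight (rl_kernel \<gamma>) x k"
  proof (rule has_integral_le)
    show "((\<lambda>s. rl_kernel \<gamma> (x - s) * rl_kernel \<beta> s) has_integral
        integral {t k..t (Suc k)} (\<lambda>s. rl_kernel \<gamma> (x - s) * rl_kernel \<beta> s)) {t k..t (Suc k)}"
      using int by (rule integrable_integral)
    show "((\<lambda>s. rl_kernel \<beta> (t (Suc k)) * rl_kernel \<gamma> (x - s)) has_integral
        rl_kernel \<beta> (t (Suc k)) * cell_weight (rl_kernel \<gamma>) x k) {t k..t (Suc k)}"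
      using has_integral_cell_weight(1)[OF \<gamma>, of k x] k by (intro has_integral_mult_right) simp
    show "rl_kernel \<gamma> (x - s) * rl_kernel \<beta> s \<le> rl_kernel \<beta> (t (Suc k)) * rl_kernel \<gamma> (x - s)"
      if "s \<in> {t k..t (Suc k)}" for s
      using that \<beta> \<gamma> t_nonneg[of k] k
      by (subst mult.commute) (auto intro!: mult_right_mono rl_kernel_mono rl_kernel_nonneg)
  qed
  also have "\<dots> \<le> slope (rl_kernel (1 + \<beta>)) (Suc k) * cell_weight (rl_kernel \<gamma>) x k"
    using slope_rl_kernel_bounds(1)[OF \<beta> k(1)] cell_weight_nonneg[OF \<gamma>, of k x] k
    by (intro mult_right_mono) simp_all
  finally show ?thesis .
qed
end

locale quasi_uniform_mesh = mesh +
  fixes \<rho> :: real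
  assumes rho_pos: "0 < \<rho>"
    and step_ratio: "\<And>k. 0 < k \<Longrightarrow> k < N \<Longrightarrow> (t k - t (k - 1)) / (t (Suc k) - t k) \<le> \<rho>"
begin

lemma t_diff_le_ratio: "r < n \<Longrightarrow> n < N \<Longrightarrow> t n - t r \<le> \<rho> * (t (Suc n) - t (Suc r))"
proof (induction n)
  case (Suc n)
  have "(t (Suc n) - t n) / (t (Suc (Suc n)) - t (Suc n)) \<le> \<rho>"
    using step_ratio[of "Suc n"] Suc.prems by simp
  then have step: "t (Suc n) - t n \<le> \<rho> * (t (Suc (Suc n)) - t (Suc n))"
    using t_less_Suc[of "Suc n"] Suc.prems by (simp add: divide_le_eq)
  show ?case
  proof (cases "r = n")
    case False
    with Suc have "t n - t r \<le> \<rho> * (t (Suc n) - t (Suc r))" by simp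
    with step show ?thesis by (simp add: algebra_simps)
  qed (use step in simp)
qed simp

lemma tail_cell_weights_le:
  assumes "0 < \<gamma>" and "\<gamma> \<le> 1" and "r < n" and "n < N"
  shows "(\<Sum>k\<in>{r..<n}. cell_weight (rl_kernel \<gamma>) (t n) k)
           \<le> (\<Sum>k\<in>{r..<n}. max 1 \<rho> * cell_weight (rl_kernel \<gamma>) (t (Suc n)) (Suc k))"
proof -
  have "(\<Sum>k\<in>{r..<n}. cell_weight (rl_kernel \<gamma>) (t n) k) = rl_kernel (1 + \<gamma>) (t n - t r)"
    using sum_cell_weights[OF \<open>0 < \<gamma>\<close>, of r n "t n"] assms by (simp add: rl_kernel_def)
  also have "\<dots> \<le> max 1 \<rho> * rl_kernel (1 + \<gamma>) (t (Suc n) - t (Suc r))"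
    using assms t_mono[of r n] t_diff_le_ratio[of r n] rho_pos by (intro rl_kernel_le_scaled) auto
  also have "rl_kernel (1 + \<gamma>) (t (Suc n) - t (Suc r)) = (\<Sum>k\<in>{Suc r..<Suc n}. cell_weight (rl_kernel \<gamma>) (t (Suc n)) k)"
    using sum_cell_weights[OF \<open>0 < \<gamma>\<close>, of "Suc r" "Suc n" "t (Suc n)"] assms by (simp add: rl_kernel_def)
  finally show ?thesis
    by (simp only: sum.shift_bounds_Suc_ivl sum_distrib_left)
qed

text \<open>Abel summation moves the kernel from \<open>t_n\<close> to \<open>t_(n+1)\<close> at the cost of the factor
  \<open>max 1 \<rho>\<close>, since the slopes of \<open>\<omega>_(1+\<beta>)\<close> increase.\<close>
lemma rl_kernel_le_l1_sum_convex:
  assumes \<beta>: "1 < \<beta>" and \<gamma>: "0 < \<gamma>" "\<gamma> \<le> 1" and "n < N"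
  shows "rl_kernel (\<beta> + \<gamma>) (t n) \<le> max 1 \<rho> * l1_sum (rl_kernel \<gamma>) (rl_kernel (1 + \<beta>)) n"
proof (cases "n = 0")
  case True
  then show ?thesis
    using l1_sum_rl_kernel_nonneg[of \<beta> \<gamma> n] assms t_0 by (simp add: rl_kernel_def)
next
  case False
  define a where "a k = slope (rl_kernel (1 + \<beta>)) k" for k
  define W where "W x k = cell_weight (rl_kernel \<gamma>) x k" for x k
  have "rl_kernel (\<beta> + \<gamma>) (t n)
      = (\<Sum>k<n. integral {t k..t (Suc k)} (\<lambda>s. rl_kernel \<gamma> (t n - s) * rl_kernel \<beta> s))"
    using rl_kernel_convolution_cells(2)[of \<beta> \<gamma> n] assms False by simp
  also have "\<dots> \<le> (\<Sum>k<n. a (Suc k) * W (t n) k)"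
    unfolding a_def W_def using assms False rl_kernel_convolution_cells(1)[of \<beta> \<gamma> n]
    by (intro sum_mono cell_integral_le_slope_convex) (auto intro: t_mono)
  also have "\<dots> \<le> (\<Sum>k<n. a (Suc k) * (max 1 \<rho> * W (t (Suc n)) (Suc k)))"
  proof (rule sum_mult_le_of_tail_sums_le)
    show "a (Suc l) \<le> a (Suc (Suc l))" if "Suc l < n" for l
      using slope_rl_kernel_bounds[of \<beta> "Suc l"] slope_rl_kernel_bounds[of \<beta> "Suc (Suc l)"] that assms
      by (simp add: a_def)
    show "0 \<le> a (Suc 0)"
      using slope_rl_kernel_nonneg[of \<beta> 1] assms False by (simp add: a_def)
    show "(\<Sum>k\<in>{r..<n}. W (t n) k) \<le> (\<Sum>k\<in>{r..<n}. max 1 \<rho> * W (t (Suc n)) (Suc k))" if "r < n" for r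
      using tail_cell_weights_le[OF \<gamma> that \<open>n < N\<close>] by (simp add: W_def)
  qed
  also have "\<dots> = max 1 \<rho> * (\<Sum>k<n. a (Suc k) * W (t (Suc n)) (Suc k))"
    by (simp add: sum_distrib_left mult_ac)
  also have "\<dots> \<le> max 1 \<rho> * (a 0 * W (t (Suc n)) 0 + (\<Sum>k<n. a (Suc k) * W (t (Suc n)) (Suc k)))"
    using slope_rl_kernel_nonneg[of \<beta> 0] cell_weight_nonneg[OF \<gamma>(1), of 0 "t (Suc n)"] assms t_mono[of 1 "Suc n"]
    by (intro mult_left_mono) (simp_all add: a_def W_def)
  also have "\<dots> = max 1 \<rho> * l1_sum (rl_kernel \<gamma>) (rl_kernel (1 + \<beta>)) n"
    by (simp add: l1_sum_def a_def W_def sum.atMost_shift)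
  finally show ?thesis .
qed

text \<open>\<open>\<omega>_(1+m\<alpha>) = \<omega>_(1-\<alpha>) * \<omega>_((m+1)\<alpha>)\<close>, and \<open>\<omega>_((m+1)\<alpha>)\<close> is decreasing or increasing
  according as \<open>(m+1)\<alpha> \<le> 1\<close> or not.\<close>
lemma ml_term_le_l1_sum:
  assumes "0 < \<alpha>" and "\<alpha> < 1" and "n < N"
  shows "ml_term \<alpha> m (t n) \<le> max 1 \<rho> * l1_sum (omega \<alpha>) (ml_term \<alpha> (Suc m)) n"
proof -
  define \<beta> where "\<beta> = real (Suc m) * \<alpha>"
  have "0 < \<beta>"
    using assms by (simp add: \<beta>_def)
  have order: "\<beta> + (1 - \<alpha>) = 1 + real m * \<alpha>"
    by (simp add: \<beta>_def algebra_simps)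
  have "l1_sum (omega \<alpha>) (ml_term \<alpha> (Suc m)) n = l1_sum (rl_kernel (1 - \<alpha>)) (rl_kernel (1 + \<beta>)) n"
    unfolding l1_sum_def slope_def omega_eq_rl_kernel
    using assms t_nonneg by (intro sum.cong refl) (simp add: ml_term_eq_rl_kernel_nonneg \<beta>_def)
  moreover have "ml_term \<alpha> m (t n) \<le> max 1 \<rho> * l1_sum (rl_kernel (1 - \<alpha>)) (rl_kernel (1 + \<beta>)) n"
  proof (cases "\<beta> \<le> 1")
    case True
    have "ml_term \<alpha> m (t n) \<le> ml_term \<alpha> m (t (Suc n))"
      using assms t_nonneg t_mono by (intro ml_term_mono) auto
    also have "\<dots> = rl_kernel (\<beta> + (1 - \<alpha>)) (t (Suc n))"
      using t_less[of 0 "Suc n"] t_0 assms by (simp add: ml_term_eq_rl_kernel order)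
    also have "\<dots> \<le> l1_sum (rl_kernel (1 - \<alpha>)) (rl_kernel (1 + \<beta>)) n"
      using assms True \<open>0 < \<beta>\<close> by (intro rl_kernel_le_l1_sum_concave) auto
    also have "\<dots> \<le> max 1 \<rho> * l1_sum (rl_kernel (1 - \<alpha>)) (rl_kernel (1 + \<beta>)) n"
      using l1_sum_rl_kernel_nonneg[of \<beta> "1 - \<alpha>" n] \<open>0 < \<beta>\<close> assms
      by (intro mult_le_cancel_right1[THEN iffD2]) auto
    finally show ?thesis .
  next
    case False
    then have "0 < m"
      using assms by (cases m) (auto simp: \<beta>_def)
    then have "ml_term \<alpha> m (t n) = rl_kernel (\<beta> + (1 - \<alpha>)) (t n)"
      using t_nonneg assms by (simp add: ml_term_eq_rl_kernel_nonneg order)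
    also have "\<dots> \<le> max 1 \<rho> * l1_sum (rl_kernel (1 - \<alpha>)) (rl_kernel (1 + \<beta>)) n"
      using assms False by (intro rl_kernel_le_l1_sum_convex) auto
    finally show ?thesis .
  qed
  ultimately show ?thesis
    by simp
qed

end

section \<open>The discrete fractional Gronwall inequality\<close>

lemma sum_diff_le_sum_lessThan:
  fixes lam :: "nat \<Rightarrow> real"
  assumes "\<And>l. l < N \<Longrightarrow> 0 \<le> lam l" and "i < N"
  shows "(\<Sum>k\<le>i. lam (i - k)) \<le> (\<Sum>l<N. lam l)"
proof -
  have "(\<Sum>k\<le>i. lam (i - k)) = (\<Sum>l\<le>i. lam l)"
    by (rule sum.reindex_bij_witness[of _ "\<lambda>l. i - l" "\<lambda>k. i - k"]) auto
  also have "\<dots> \<le> (\<Sum>l<N. lam l)"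
    using assms by (intro sum_mono2) auto
  finally show ?thesis .
qed

locale admissible_kernel = quasi_uniform_mesh +
  fixes \<alpha> \<pi>B :: real and B :: "nat \<Rightarrow> nat \<Rightarrow> real"
  assumes alpha: "0 < \<alpha>" "\<alpha> < 1" and piB_pos: "0 < \<pi>B"
    and B_antimono: "\<And>n k. n < N \<Longrightarrow> k < n \<Longrightarrow> B n (Suc k) \<le> B n k"
    and B_diag_pos: "\<And>n. n < N \<Longrightarrow> 0 < B n n"
    and B_ge_cell_average: "\<And>n k. n < N \<Longrightarrow> k \<le> n \<Longrightarrow>
      1 / (\<pi>B * (t (Suc k) - t k)) * integral {t k..t (Suc k)} (\<lambda>s. omega \<alpha> (t (Suc n) - s)) \<le> B n (n - k)"
begin

lemma B_0_pos: "n < N \<Longrightarrow> 0 < B n 0"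
  using kernel_ge_diag[of n B 0] B_antimono B_diag_pos by fastforce

lemma ptilde_nonneg_admissible: "n < N \<Longrightarrow> k \<le> n \<Longrightarrow> 0 \<le> ptilde B n (n - k)"
  by (rule ptilde_nonneg) (auto intro: B_antimono B_diag_pos)

lemma sum_ptilde_discrete_caputo_admissible:
  "n < N \<Longrightarrow> (\<Sum>i\<le>n. ptilde B n (n - i) * discrete_caputo B x i) = x (Suc n) - x 0"
  by (rule sum_ptilde_discrete_caputo) (metis B_0_pos le_less_trans less_irrefl)

lemma l1_sum_le_discrete_caputo:
  assumes "n < N" and mono: "\<And>k. k \<le> n \<Longrightarrow> F (t k) \<le> F (t (Suc k))"
  shows "l1_sum (omega \<alpha>) F n \<le> \<pi>B * discrete_caputo B (\<lambda>k. F (t k)) n"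
  unfolding l1_sum_def discrete_caputo_def sum_distrib_left
proof (rule sum_mono)
  fix k assume "k \<in> {..n}"
  then have k: "k \<le> n" "t k < t (Suc k)"
    using assms t_less_Suc[of k] by auto
  have "slope F k * cell_weight (omega \<alpha>) (t (Suc n)) k
      = \<pi>B * ((F (t (Suc k)) - F (t k)) *
          (1 / (\<pi>B * (t (Suc k) - t k)) * integral {t k..t (Suc k)} (\<lambda>s. omega \<alpha> (t (Suc n) - s))))"
    using piB_pos k by (simp add: slope_def cell_weight_def field_simps)
  also have "\<dots> \<le> \<pi>B * ((F (t (Suc k)) - F (t k)) * B n (n - k))"
    using B_ge_cell_average[of n k] mono[of k] piB_pos k assms
    by (intro mult_left_mono) auto
  finally show "slope F k * cell_weight (omega \<alpha>) (t (Suc n)) k \<le> \<pi>B * (B n (n - k) * (F (t (Suc k)) - F (t k)))"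
    by (simp add: mult_ac)
qed

text \<open>(A2) transfers the L1 estimate of \<open>ml_term \<alpha> m\<close> to the discrete Caputo operator, which the
  nonnegative complementary kernel inverts.\<close>
lemma sum_ptilde_ml_term_le:
  assumes "n < N"
  shows "(\<Sum>i\<le>n. ptilde B n (n - i) * ml_term \<alpha> m (t i)) \<le> max 1 \<rho> * \<pi>B * ml_term \<alpha> (Suc m) (t (Suc n))"
proof -
  define F where "F = ml_term \<alpha> (Suc m)"
  have "ml_term \<alpha> m (t i) \<le> max 1 \<rho> * \<pi>B * discrete_caputo B (\<lambda>k. F (t k)) i" if "i \<le> n" for i
  proof -
    have "ml_term \<alpha> m (t i) \<le> max 1 \<rho> * l1_sum (omega \<alpha>) F i"
      using ml_term_le_l1_sum alpha that assms by (simp add: F_def)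
    also have "\<dots> \<le> max 1 \<rho> * (\<pi>B * discrete_caputo B (\<lambda>k. F (t k)) i)"
      using that assms alpha t_nonneg t_mono[of _ "Suc _"]
      by (intro mult_left_mono l1_sum_le_discrete_caputo) (auto simp: F_def intro!: ml_term_mono)
    finally show ?thesis by (simp add: mult.assoc)
  qed
  then have "(\<Sum>i\<le>n. ptilde B n (n - i) * ml_term \<alpha> m (t i))
      \<le> (\<Sum>i\<le>n. ptilde B n (n - i) * (max 1 \<rho> * \<pi>B * discrete_caputo B (\<lambda>k. F (t k)) i))"
    using ptilde_nonneg_admissible assms by (intro sum_mono mult_left_mono) auto
  also have "\<dots> = max 1 \<rho> * \<pi>B * (F (t (Suc n)) - F (t 0))"
    using sum_ptilde_discrete_caputo_admissible[OF assms, of "\<lambda>k. F (t k)"]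
    by (simp add: sum_distrib_left[symmetric] mult.left_commute)
  also have "F (t 0) = 0"
    by (simp add: F_def t_0 ml_term_def)
  finally show ?thesis by (simp add: F_def)
qed

definition growth :: "real \<Rightarrow> real \<Rightarrow> real" where
  "growth \<Lambda> x = mittag_leffler \<alpha> (max 1 \<rho> * \<pi>B * \<Lambda> * x powr \<alpha>)"

lemma growth_0: "growth \<Lambda> 0 = 1"
  by (simp add: growth_def mittag_leffler_0)

lemma growth_mono: "0 \<le> \<Lambda> \<Longrightarrow> 0 \<le> x \<Longrightarrow> x \<le> y \<Longrightarrow> growth \<Lambda> x \<le> growth \<Lambda> y"
  unfolding growth_def using alpha piB_pos
  by (intro mittag_leffler_mono mult_left_mono powr_mono2) auto

lemma sum_ptilde_growth_le:
  assumes "n < N" and "0 \<le> \<Lambda>"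
  shows "1 + \<Lambda> * (\<Sum>i\<le>n. ptilde B n (n - i) * growth \<Lambda> (t i)) \<le> growth \<Lambda> (t (Suc n))"
  unfolding growth_def using alpha piB_pos assms sum_ptilde_ml_term_le[OF \<open>n < N\<close>]
  by (intro mittag_leffler_sum_le) auto

lemma discrete_fractional_gronwall_step:
  fixes lam g \<psi> :: "nat \<Rightarrow> real" and \<Lambda> v :: real
  assumes lam_nonneg: "\<And>l. l < N \<Longrightarrow> 0 \<le> lam l" and lam_sum: "(\<Sum>l<N. lam l) \<le> \<Lambda>"
    and ineq: "\<And>n. n < N \<Longrightarrow> discrete_caputo B \<psi> n \<le> (\<Sum>k\<le>n. lam (n - k) * \<psi> k) + g (Suc n)"
    and "j < N" and "0 \<le> v" and v_bound: "\<psi> 0 + (\<Sum>i\<le>j. ptilde B j (j - i) * g (Suc i)) \<le> v"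
    and earlier: "\<And>k. k \<le> j \<Longrightarrow> \<psi> k \<le> growth \<Lambda> (t k) * v"
  shows "\<psi> (Suc j) \<le> growth \<Lambda> (t (Suc j)) * v"
proof -
  have "0 \<le> \<Lambda>"
    using lam_sum sum_nonneg[of "{..<N}" lam] lam_nonneg by fastforce
  have caputo_le: "discrete_caputo B \<psi> i \<le> \<Lambda> * (growth \<Lambda> (t i) * v) + g (Suc i)" if "i \<le> j" for i
  proof -
    have "\<psi> k \<le> growth \<Lambda> (t i) * v" if "k \<le> i" for k
      using earlier[of k] growth_mono[OF \<open>0 \<le> \<Lambda>\<close> t_nonneg t_mono, of k i] mult_right_mono \<open>0 \<le> v\<close>
        that \<open>i \<le> j\<close> \<open>j < N\<close> by fastforce
    then have "(\<Sum>k\<le>i. lam (i - k) * \<psi> k) \<le> (\<Sum>k\<le>i. lam (i - k)) * (growth \<Lambda> (t i) * v)"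
      unfolding sum_distrib_right using lam_nonneg that \<open>j < N\<close> by (intro sum_mono mult_left_mono) auto
    also have "\<dots> \<le> \<Lambda> * (growth \<Lambda> (t i) * v)"
      using sum_diff_le_sum_lessThan[where lam = lam and N = N and i = i, OF lam_nonneg] lam_sum that \<open>j < N\<close> \<open>0 \<le> v\<close>
        growth_mono[OF \<open>0 \<le> \<Lambda>\<close> order_refl t_nonneg, of i] growth_0
      by (intro mult_right_mono) auto
    finally show ?thesis
      using ineq[of i] that \<open>j < N\<close> by simp
  qed
  have "\<psi> (Suc j) = \<psi> 0 + (\<Sum>i\<le>j. ptilde B j (j - i) * discrete_caputo B \<psi> i)"
    using sum_ptilde_discrete_caputo_admissible[OF \<open>j < N\<close>] by simp
  also have "\<dots> \<le> \<psi> 0 + (\<Sum>i\<le>j. ptilde B j (j - i) * (\<Lambda> * (growth \<Lambda> (t i) * v) + g (Suc i)))"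
    using caputo_le ptilde_nonneg_admissible \<open>j < N\<close> by (intro add_left_mono sum_mono mult_left_mono) auto
  also have "\<dots> = (\<psi> 0 + (\<Sum>i\<le>j. ptilde B j (j - i) * g (Suc i)))
      + v * (\<Lambda> * (\<Sum>i\<le>j. ptilde B j (j - i) * growth \<Lambda> (t i)))"
    by (simp add: distrib_left sum.distrib sum_distrib_left mult_ac)
  also have "\<dots> \<le> v * (1 + \<Lambda> * (\<Sum>i\<le>j. ptilde B j (j - i) * growth \<Lambda> (t i)))"
    using v_bound by (simp add: algebra_simps)
  also have "\<dots> \<le> v * growth \<Lambda> (t (Suc j))"
    using sum_ptilde_growth_le[OF \<open>j < N\<close> \<open>0 \<le> \<Lambda>\<close>] \<open>0 \<le> v\<close> by (rule mult_left_mono)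
  finally show ?thesis
    by (simp add: mult.commute)
qed

lemma discrete_fractional_gronwall:
  fixes lam g \<psi> :: "nat \<Rightarrow> real" and \<Lambda> v :: real
  assumes lam_nonneg: "\<And>l. l < N \<Longrightarrow> 0 \<le> lam l" and lam_sum: "(\<Sum>l<N. lam l) \<le> \<Lambda>"
    and ineq: "\<And>n. n < N \<Longrightarrow> discrete_caputo B \<psi> n \<le> (\<Sum>k\<le>n. lam (n - k) * \<psi> k) + g (Suc n)"
    and "n < N" and "0 \<le> v" and "\<psi> 0 \<le> v"
    and v_bound: "\<And>k. k \<le> n \<Longrightarrow> \<psi> 0 + (\<Sum>j\<le>k. ptilde B k (k - j) * g (Suc j)) \<le> v"
  shows "\<psi> (Suc n) \<le> growth \<Lambda> (t (Suc n)) * v"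
proof -
  have "\<psi> m \<le> growth \<Lambda> (t m) * v" if "m \<le> Suc n" for m
    using that
  proof (induction m rule: less_induct)
    case (less m)
    show ?case
    proof (cases m)
      case 0
      then show ?thesis using growth_0 t_0 \<open>\<psi> 0 \<le> v\<close> by simp
    next
      case (Suc j)
      with less.prems \<open>n < N\<close> have "j \<le> n" "j < N" by auto
      then show ?thesis
        unfolding Suc using lam_nonneg lam_sum ineq \<open>0 \<le> v\<close> v_bound less.IH Suc less.prems
        by (intro discrete_fractional_gronwall_step) auto
    qed
  qed
  then show ?thesis by simp
qed
end

theorem theorem3p3:
  fixes N :: nat and T \<alpha> \<rho> \<pi>B \<Lambda> :: real
    and t :: "nat \<Rightarrow> real" and B :: "nat \<Rightarrow> nat \<Rightarrow> real"
    and g lam \<psi> :: "nat \<Rightarrow> real"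
  assumes mesh0: "t 0 = 0" and meshN: "t N = T"
    and mesh_mono: "\<forall>k<N. t k < t (Suc k)"
    and alpha: "0 < \<alpha>" "\<alpha> < 1"
    and A1: "\<forall>n<N. (\<forall>k<n. B n (Suc k) \<le> B n k) \<and> B n n > 0"
    and A2_pos: "\<pi>B > 0"
    and A2: "\<forall>n<N. \<forall>k\<le>n. B n (n - k) \<ge>
              1 / (\<pi>B * (t (Suc k) - t k)) * integral {t k..t (Suc k)} (\<lambda>s. omega \<alpha> (t (Suc n) - s))"
    and A3_pos: "\<rho> > 0"
    and A3: "\<forall>k. 1 \<le> k \<and> k \<le> N - 1 \<longrightarrow> (t k - t (k - 1)) / (t (Suc k) - t k) \<le> \<rho>"
    and g_nonneg: "\<forall>n. 1 \<le> n \<and> n \<le> N \<longrightarrow> g n \<ge> 0"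
    and lam_nonneg: "\<forall>l<N. lam l \<ge> 0"
    and Lambda_pos: "\<Lambda> > 0"
    and lam_sum: "(\<Sum>l<N. lam l) \<le> \<Lambda>"
    and psi_nonneg: "\<forall>k\<le>N. \<psi> k \<ge> 0"
    and ineq: "\<forall>n<N. (\<Sum>k\<le>n. B n (n - k) * (\<psi> (Suc k) - \<psi> k))
                 \<le> (\<Sum>k\<le>n. lam (n - k) * \<psi> k) + g (Suc n)"
  shows "\<forall>n<N. \<psi> (Suc n) \<le>
           mittag_leffler \<alpha> (max 1 \<rho> * \<pi>B * \<Lambda> * t (Suc n) powr \<alpha>) *
           (\<psi> 0 + Max {(\<Sum>j\<le>k. ptilde B k (k - j) * g (Suc j)) | k. k \<le> n})"
proof (intro allI impI)
  fix n assume "n < N"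
  interpret admissible_kernel t N \<rho> \<alpha> \<pi>B B
    using mesh0 mesh_mono alpha A1 A2_pos A2 A3_pos A3 by unfold_locales auto
  define M where "M = Max {(\<Sum>j\<le>k. ptilde B k (k - j) * g (Suc j)) | k. k \<le> n}"
  have M_ge: "(\<Sum>j\<le>k. ptilde B k (k - j) * g (Suc j)) \<le> M" if "k \<le> n" for k
    unfolding M_def using that by (intro Max_ge) (auto simp: setcompr_eq_image)
  have "0 \<le> ptilde B 0 0 * g 1"
    using ptilde_nonneg_admissible[of 0 0] g_nonneg \<open>n < N\<close> by simp
  then have "0 \<le> M"
    using M_ge[of 0] by simp
  show "\<psi> (Suc n) \<le> mittag_leffler \<alpha> (max 1 \<rho> * \<pi>B * \<Lambda> * t (Suc n) powr \<alpha>) *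
      (\<psi> 0 + Max {(\<Sum>j\<le>k. ptilde B k (k - j) * g (Suc j)) | k. k \<le> n})"
    unfolding M_def[symmetric] growth_def[symmetric]
  proof (rule discrete_fractional_gronwall)
    show "\<And>l. l < N \<Longrightarrow> 0 \<le> lam l" "(\<Sum>l<N. lam l) \<le> \<Lambda>"
      using lam_nonneg lam_sum by simp_all
    show "\<And>m. m < N \<Longrightarrow> discrete_caputo B \<psi> m \<le> (\<Sum>k\<le>m. lam (m - k) * \<psi> k) + g (Suc m)"
      using ineq by (simp add: discrete_caputo_def)
    show "0 \<le> \<psi> 0 + M" "\<psi> 0 \<le> \<psi> 0 + M"
      using psi_nonneg \<open>0 \<le> M\<close> by simp_all
    show "\<And>k. k \<le> n \<Longrightarrow> \<psi> 0 + (\<Sum>j\<le>k. ptilde B k (k - j) * g (Suc j)) \<le> \<psi> 0 + M"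
      using M_ge by simp
  qed (rule \<open>n < N\<close>)
qed

end
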